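(* Let $k$ be a field, $(C,\Delta)$ a coassociative coalgebra, $(L,\phi)$ a Lie algebra and $B$ a Lie module over $L$ via $\psi:L\otimes B\to B$. Let $n\ge 0$ and $f\in Alt^n(L,B)$, with induced map $F$. Then $\delta F$ (defined below) equals the map $Hom(C,L)^{\otimes(n+1)}\to Hom(C,B)$ induced by $df\in Alt^{n+1}(L,B)$; in particular $\delta F$ is TD skew symmetric, so $\delta$ maps $TDalt^n(Hom(C,L),Hom(C,B))$ into $TDalt^{n+1}(Hom(C,L),Hom(C,B))$.
   Context: Iterated coproduct $\Delta^{(m-1)}:C\to C^{\otimes m}$ ($\Delta^{(0)}=\mathrm{id}$, $\Delta^{(m-1)}=(\Delta\otimes1\otimes\dots\otimes1)\circ\Delta^{(m-2)}$), written $\sum c_{(1)}\otimes\dots\otimes c_{(m)}$. $S_m$ acts on $m$-fold tensor products by $\sigma(x_1\otimes\dots\otimes x_m)=x_{\sigma(1)}\otimes\dots\otimes x_{\sigma(m)}$. For $\chi:X_1\otimes\dots\otimes X_m\to Y$, the induced map sends $f_1\otimes\dots\otimes f_m$ ($f_j\in Hom(C,X_j)$) to $\chi\circ(f_1\otimes\dots\otimes f_m)\circ\Delta^{(m-1)}$. A map $G:Hom(C,L)^{\otimes m}\to Hom(C,B)$ induced by $\chi$ is TD skew if $G\circ\sigma=(-1)^\sigma G^{\sigma^{-1}}$ for all $\sigma\in S_m$, where $G^\sigma(f_1\otimes\dots\otimes f_m)=\chi\circ(f_1\otimes\dots\otimes f_m)\circ\sigma\circ\Delta^{(m-1)}$.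 $Alt^n(L,B)$ is the space of skew symmetric linear maps $L^{\otimes n}\to B$, with $Alt^0(L,B)=B$; the Chevalley–Eilenberg differential is $df(x_1,\dots,x_{n+1})=\sum_{i=1}^{n+1}(-1)^{i+1}\psi(x_i,f(x_1,\dots,\hat{x_i},\dots,x_{n+1}))+\sum_{j<k}(-1)^{j+k}f(\phi(x_j,x_k),x_1,\dots,\hat{x_j},\dots,\hat{x_k},\dots,x_{n+1})$. $TDalt^n(Hom(C,L),Hom(C,B))$ is the space of TD skew maps $Hom(C,L)^{\otimes n}\to Hom(C,B)$ (for $n=0$ identified with $B$). Let $\Phi,\Psi$ be the maps induced by $\phi,\psi$ and $F$ the map induced by $f$. For $\sigma\in S_{n+1}$ define $(\Psi\circ(1\otimes F))^{\sigma}(g_1\otimes\dots\otimes g_{n+1})(c)=\sum\psi\big(g_1(c_{(\sigma(1))}),f(g_2(c_{(\sigma(2))})\otimes\dots\otimes g_{n+1}(c_{(\sigma(n+1))}))\big)$ and, for $n\ge1$, $(F\circ(\Phi\otimes1))^{\sigma}(g_1\otimes\dots\otimes g_{n+1})(c)=\sum f\big(\phi(g_1(c_{(\sigma(1))}),g_2(c_{(\sigma(2))}))\otimes g_3(c_{(\sigma(3))})\otimes\dots\otimes g_{n+1}(c_{(\sigma(n+1))})\big)$. A $(p,q)$-unshuffle is $\sigma\in S_{p+q}$ with $\sigma(1)<\dots<\sigma(p)$ and $\sigma(p+1)<\dots<\sigma(p+q)$. Define $$\delta F=\sum_{\sigma}(-1)^{\sigma}(\Psi\circ(1\otimes F))^{\sigma}\circ\sigma-\sum_{\sigma'}(-1)^{\sigma'}(F\circ(\Phi\otimes1))^{\sigma'}\circ\sigma',$$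 $\sigma$ over $(1,n)$-unshuffles, $\sigma'$ over $(2,n-1)$-unshuffles (the second sum is empty for $n=0$), and $\sigma$ acting on $Hom(C,L)^{\otimes(n+1)}$ by permuting factors. For $n=0$ this reads $(\delta F)(g)(c)=\psi(g(c),f)$. *)

theory Defs
  imports Complex_Main "HOL-Combinatorics.Permutations"
begin

text \<open>Elements of
m-fold tensor products are handled through pure tensors, written as lists of
length m; multilinear maps on m-tuples (i.e. linear maps out of the m-fold
tensor product) are functions on lists of length m.  Indices are 0-based.\<close>

definition multilin ::
  "('k::field \<Rightarrow> 'a::ab_group_add \<Rightarrow> 'a) \<Rightarrow> ('k \<Rightarrow> 'b::ab_group_add \<Rightarrow> 'b)
     \<Rightarrow> nat \<Rightarrow> ('a list \<Rightarrow> 'b) \<Rightarrow> bool" where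
  "multilin s1 s2 m h \<longleftrightarrow>
     (\<forall>xs ys. length xs + length ys + 1 = m \<longrightarrow> Vector_Spaces.linear s1 s2 (\<lambda>v. h (xs @ v # ys)))"

definition bilin ::
  "('k::field \<Rightarrow> 'a::ab_group_add \<Rightarrow> 'a) \<Rightarrow> ('k \<Rightarrow> 'b::ab_group_add \<Rightarrow> 'b)
     \<Rightarrow> ('k \<Rightarrow> 'c::ab_group_add \<Rightarrow> 'c) \<Rightarrow> ('a \<Rightarrow> 'b \<Rightarrow> 'c) \<Rightarrow> bool" where
  "bilin s1 s2 s3 h \<longleftrightarrow> (\<forall>x. Vector_Spaces.linear s2 s3 (h x)) \<and> (\<forall>y. Vector_Spaces.linear s1 s3 (\<lambda>x. h x y))"

definition lie_algebra ::
  "('k::field \<Rightarrow> 'l::ab_group_add \<Rightarrow> 'l) \<Rightarrow> ('l \<Rightarrow> 'l \<Rightarrow> 'l) \<Rightarrow> bool" where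
  "lie_algebra sL \<phi> \<longleftrightarrow> vector_space sL \<and> bilin sL sL sL \<phi> \<and> (\<forall>x. \<phi> x x = 0) \<and>
     (\<forall>x y z. \<phi> x (\<phi> y z) + \<phi> y (\<phi> z x) + \<phi> z (\<phi> x y) = 0)"

definition lie_module ::
  "('k::field \<Rightarrow> 'l::ab_group_add \<Rightarrow> 'l) \<Rightarrow> ('k \<Rightarrow> 'b::ab_group_add \<Rightarrow> 'b)
     \<Rightarrow> ('l \<Rightarrow> 'l \<Rightarrow> 'l) \<Rightarrow> ('l \<Rightarrow> 'b \<Rightarrow> 'b) \<Rightarrow> bool" where
  "lie_module sL sB \<phi> \<psi> \<longleftrightarrow> vector_space sB \<and> bilin sL sB sB \<psi> \<and>
     (\<forall>x y b. \<psi> (\<phi> x y) b = \<psi> x (\<psi> y b) - \<psi> y (\<psi> x b))"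

text \<open>The coproduct is given by a chosen Sweedler representative
\<open>\<Delta> c = [(c1_1, c2_1), ...]\<close> standing for \<open>\<Sum>i c1_i \<otimes> c2_i \<in> C \<otimes> C\<close>.
Over a field, elements of a tensor product are separated by multilinear forms
with values in k, so linearity of Delta and coassociativity are stated by testing
against bilinear resp. trilinear forms C x C (x C) -> k.\<close>

definition coassoc_coalgebra ::
  "('k::field \<Rightarrow> 'c::ab_group_add \<Rightarrow> 'c) \<Rightarrow> ('c \<Rightarrow> ('c \<times> 'c) list) \<Rightarrow> bool" where
  "coassoc_coalgebra sC \<Delta> \<longleftrightarrow> vector_space sC \<and>
     (\<forall>\<beta>::'c list \<Rightarrow> 'k. multilin sC (*) 2 \<beta> \<longrightarrow>
        Vector_Spaces.linear sC (*) (\<lambda>c. \<Sum>(a, b)\<leftarrow>\<Delta> c. \<beta> [a, b])) \<and>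
     (\<forall>\<tau>::'c list \<Rightarrow> 'k. multilin sC (*) 3 \<tau> \<longrightarrow> (\<forall>c.
        (\<Sum>(a, b)\<leftarrow>\<Delta> c. \<Sum>(a1, a2)\<leftarrow>\<Delta> a. \<tau> [a1, a2, b]) =
        (\<Sum>(a, b)\<leftarrow>\<Delta> c. \<Sum>(b1, b2)\<leftarrow>\<Delta> b. \<tau> [a, b1, b2])))"

text \<open>Iterated coproduct: \<open>iter_coprod \<Delta> m c\<close> represents \<open>\<Delta>^(m) c \<in> C^{\<otimes>(m+1)}\<close>
(so \<open>\<Delta>^(0) = id\<close>, \<open>\<Delta>^(m+1) = (\<Delta> \<otimes> 1 \<otimes> ... \<otimes> 1) \<circ> \<Delta>^(m)\<close>), as a list of
(m+1)-tuples \<open>[c_(1), ..., c_(m+1)]\<close>.\<close>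

fun iter_coprod :: "('c \<Rightarrow> ('c \<times> 'c) list) \<Rightarrow> nat \<Rightarrow> 'c \<Rightarrow> 'c list list" where
  "iter_coprod \<Delta> 0 c = [[c]]"
| "iter_coprod \<Delta> (Suc m) c =
     concat (map (\<lambda>t. map (\<lambda>(a, b). a # b # tl t) (\<Delta> (hd t))) (iter_coprod \<Delta> m c))"

definition Alt ::
  "('k::field \<Rightarrow> 'l::ab_group_add \<Rightarrow> 'l) \<Rightarrow> ('k \<Rightarrow> 'b::ab_group_add \<Rightarrow> 'b)
     \<Rightarrow> nat \<Rightarrow> ('l list \<Rightarrow> 'b) \<Rightarrow> bool" where
  "Alt sL sB n f \<longleftrightarrow> multilin sL sB n f \<and>
     (\<forall>xs \<sigma>. length xs = n \<longrightarrow> \<sigma> permutes {..<n} \<longrightarrow>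
        f (permute_list \<sigma> xs) = sB (of_int (sign \<sigma>)) (f xs))"

text \<open>Chevalley--Eilenberg differential (0-based indices; the paper's signs
\<open>(-1)^(i+1)\<close> and \<open>(-1)^(j+k)\<close> for 1-based indices become \<open>(-1)^i\<close>, \<open>(-1)^(j+k)\<close>).\<close>

definition CE_d ::
  "('k::field \<Rightarrow> 'b::ab_group_add \<Rightarrow> 'b) \<Rightarrow> ('l \<Rightarrow> 'l \<Rightarrow> 'l) \<Rightarrow> ('l \<Rightarrow> 'b \<Rightarrow> 'b)
     \<Rightarrow> ('l list \<Rightarrow> 'b) \<Rightarrow> 'l list \<Rightarrow> 'b" where
  "CE_d sB \<phi> \<psi> f xs =
     (\<Sum>i<length xs. sB ((-1) ^ i) (\<psi> (xs ! i) (f (nths xs (- {i}))))) +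
     (\<Sum>k<length xs. \<Sum>j<k.
        sB ((-1) ^ (j + k)) (f (\<phi> (xs ! j) (xs ! k) # nths xs (- {j, k}))))"

text \<open>Maps \<open>Hom(C,L)^{\<otimes>m} \<rightarrow> Hom(C,B)\<close> are represented by their values on pure
tensors \<open>g_1 \<otimes> ... \<otimes> g_m\<close>, i.e. functions on lists of (linear) maps C -> L.
\<open>twisted \<Delta> \<chi> \<sigma> gs\<close> is \<open>G^\<sigma>\<close>: \<open>c \<mapsto> \<Sum> \<chi>(g_1(c_(\<sigma>(1))) \<otimes> ... \<otimes> g_m(c_(\<sigma>(m))))\<close>.\<close>

definition induced ::
  "('c \<Rightarrow> ('c \<times> 'c) list) \<Rightarrow> ('l list \<Rightarrow> 'b::comm_monoid_add)
     \<Rightarrow> ('c \<Rightarrow> 'l) list \<Rightarrow> 'c \<Rightarrow> 'b" where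
  "induced \<Delta> \<chi> gs c =
     (\<Sum>ts\<leftarrow>iter_coprod \<Delta> (length gs - 1) c. \<chi> (map (\<lambda>i. (gs ! i) (ts ! i)) [0..<length gs]))"

definition twisted ::
  "('c \<Rightarrow> ('c \<times> 'c) list) \<Rightarrow> ('l list \<Rightarrow> 'b::comm_monoid_add) \<Rightarrow> (nat \<Rightarrow> nat)
     \<Rightarrow> ('c \<Rightarrow> 'l) list \<Rightarrow> 'c \<Rightarrow> 'b" where
  "twisted \<Delta> \<chi> \<sigma> gs c =
     (\<Sum>ts\<leftarrow>iter_coprod \<Delta> (length gs - 1) c.
        \<chi> (map (\<lambda>i. (gs ! i) (ts ! \<sigma> i)) [0..<length gs]))"

definition TD_skew ::
  "('k::field \<Rightarrow> 'c::ab_group_add \<Rightarrow> 'c) \<Rightarrow> ('k \<Rightarrow> 'l::ab_group_add \<Rightarrow> 'l)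
     \<Rightarrow> ('k \<Rightarrow> 'b::ab_group_add \<Rightarrow> 'b) \<Rightarrow> ('c \<Rightarrow> ('c \<times> 'c) list) \<Rightarrow> nat
     \<Rightarrow> ('l list \<Rightarrow> 'b) \<Rightarrow> (('c \<Rightarrow> 'l) list \<Rightarrow> 'c \<Rightarrow> 'b) \<Rightarrow> bool" where
  "TD_skew sC sL sB \<Delta> m \<chi> G \<longleftrightarrow> multilin sL sB m \<chi> \<and>
     (\<forall>gs. length gs = m \<longrightarrow> (\<forall>g\<in>set gs. Vector_Spaces.linear sC sL g) \<longrightarrow>
        (\<forall>c. G gs c = induced \<Delta> \<chi> gs c) \<and>
        (\<forall>\<sigma>. \<sigma> permutes {..<m} \<longrightarrow> (\<forall>c.
           G (permute_list \<sigma> gs) c = sB (of_int (sign \<sigma>)) (twisted \<Delta> \<chi> (inv \<sigma>) gs c))))"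

definition unshuffles :: "nat \<Rightarrow> nat \<Rightarrow> (nat \<Rightarrow> nat) set" where
  "unshuffles p q = {\<sigma>. \<sigma> permutes {..<p + q} \<and>
     (\<forall>i j. i < j \<and> j < p \<longrightarrow> \<sigma> i < \<sigma> j) \<and>
     (\<forall>i j. p \<le> i \<and> i < j \<and> j < p + q \<longrightarrow> \<sigma> i < \<sigma> j)}"

text \<open>Here \<open>(X^\<sigma> \<circ> \<sigma>)(gs) = X^\<sigma>(permute_list \<sigma> gs)\<close>.\<close>

definition delta_F ::
  "('k::field \<Rightarrow> 'b::ab_group_add \<Rightarrow> 'b) \<Rightarrow> ('c \<Rightarrow> ('c \<times> 'c) list)
     \<Rightarrow> ('l \<Rightarrow> 'l \<Rightarrow> 'l) \<Rightarrow> ('l \<Rightarrow> 'b \<Rightarrow> 'b) \<Rightarrow> nat \<Rightarrow> ('l list \<Rightarrow> 'b)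
     \<Rightarrow> ('c \<Rightarrow> 'l) list \<Rightarrow> 'c \<Rightarrow> 'b" where
  "delta_F sB \<Delta> \<phi> \<psi> n f gs c =
     (\<Sum>\<sigma>\<in>unshuffles 1 n. sB (of_int (sign \<sigma>))
        (twisted \<Delta> (\<lambda>ys. \<psi> (hd ys) (f (tl ys))) \<sigma> (permute_list \<sigma> gs) c)) -
     (if n = 0 then 0 else
      (\<Sum>\<sigma>\<in>unshuffles 2 (n - 1). sB (of_int (sign \<sigma>))
        (twisted \<Delta> (\<lambda>ys. f (\<phi> (ys ! 0) (ys ! 1) # drop 2 ys)) \<sigma> (permute_list \<sigma> gs) c)))"

end

theory Submission
  imports Defs
begin

(* Twisting by sigma undoes permuting by sigma: the term of delta F indexed by an unshuffle sigma
   is the sum, over the iterated coproduct of c, of the given map applied to the sigma-permuted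
   list y = (g_1(c_(1)), ..., g_(n+1)(c_(n+1))).  A (1,n)-unshuffle brings y_i to the front with
   sign (-1)^i, a (2,n-1)-unshuffle brings y_j, y_k to the front with sign -(-1)^(j+k); so the two
   sums of delta F are the two sums of the Chevalley-Eilenberg differential df at y, i.e. delta F
   is induced by df.  An adjacent transposition of the arguments of df changes the sign of every
   term (by skew symmetry of f and antisymmetry of phi), so df is skew symmetric, and therefore
   multilinear as soon as it is linear in its first argument.  Finally, the map induced by a skew
   symmetric chi is TD skew, since permuting the g's by sigma is twisting (chi o sigma) by
   sigma^-1. *)

lemma nat_less_eq_Suc_cases:
  fixes l i :: nat
  obtains "l < i" | "l = i" | "l = Suc i" | r where "l = Suc (Suc (i + r))"
  by (metis add_Suc_right less_Suc_eq less_imp_Suc_add linorder_neqE_nat)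

definition remove_nth :: "nat \<Rightarrow> 'a list \<Rightarrow> 'a list" where
  "remove_nth i xs = take i xs @ drop (Suc i) xs"

lemma remove_nth_Cons_0 [simp]: "remove_nth 0 (x # xs) = xs"
  by (simp add: remove_nth_def)

lemma remove_nth_Cons_Suc [simp]: "remove_nth (Suc i) (x # xs) = x # remove_nth i xs"
  by (simp add: remove_nth_def)

lemma remove_nth_append:
  "remove_nth i (xs @ ys) =
     (if i < length xs then remove_nth i xs @ ys else xs @ remove_nth (i - length xs) ys)"
  by (auto simp: remove_nth_def Suc_diff_le)

lemma length_remove_nth [simp]: "i < length xs \<Longrightarrow> length (remove_nth i xs) = length xs - 1"
  by (simp add: remove_nth_def)

lemma nth_remove_nth:
  "i < length xs \<Longrightarrow> l < length xs - 1 \<Longrightarrow>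
     remove_nth i xs ! l = (if l < i then xs ! l else xs ! Suc l)"
  by (auto simp: remove_nth_def nth_append min_def)

lemma nths_Compl_singleton: "nths xs (- {i}) = remove_nth i xs"
proof (induction xs arbitrary: i)
  case (Cons x xs)
  show ?case
  proof (cases i)
    case 0
    have "{j. Suc j \<in> - {i}} = UNIV" using 0 by auto
    then show ?thesis using 0 by (simp add: nths_Cons nths_all)
  next
    case (Suc i')
    have "{j. Suc j \<in> - {i}} = - {i'}" using Suc by auto
    then show ?thesis using Suc Cons by (simp add: nths_Cons)
  qed
qed (simp add: remove_nth_def)

lemma nths_Compl_doubleton: "j < k \<Longrightarrow> nths xs (- {j, k}) = remove_nth j (remove_nth k xs)"
proof (induction xs arbitrary: j k)
  case (Cons x xs)
  then obtain k' where k: "k = Suc k'" by (cases k) auto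
  show ?case
  proof (cases j)
    case 0
    have "{l. Suc l \<in> - {j, k}} = - {k'}" using 0 k by auto
    then show ?thesis using 0 k by (simp add: nths_Cons nths_Compl_singleton)
  next
    case (Suc j')
    have "{l. Suc l \<in> - {j, k}} = - {j', k'}" using Suc k by auto
    then show ?thesis using Suc k Cons by (simp add: nths_Cons)
  qed
qed (simp add: remove_nth_def)

lemma permute_list_transpose_Suc:
  assumes "length xs = i"
  shows "permute_list (Transposition.transpose i (Suc i)) (xs @ u # v # ys) = xs @ v # u # ys"
proof (rule nth_equalityI)
  have perm: "Transposition.transpose i (Suc i) permutes {..<length (xs @ u # v # ys)}"
    using assms by (intro permutes_swap_id) auto
  fix l assume "l < length (permute_list (Transposition.transpose i (Suc i)) (xs @ u # v # ys))"
  then have "l < length (xs @ u # v # ys)" by simp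
  moreover have "(xs @ u # v # ys) ! Transposition.transpose i (Suc i) l = (xs @ v # u # ys) ! l"
    using assms by (cases "l < i"; cases "l - i")
      (auto simp: nth_append transpose_def split: nat.splits)
  ultimately show "permute_list (Transposition.transpose i (Suc i)) (xs @ u # v # ys) ! l =
      (xs @ v # u # ys) ! l"
    by (simp add: permute_list_nth[OF perm])
qed simp

primrec rotate_perm :: "nat \<Rightarrow> nat \<Rightarrow> nat \<Rightarrow> nat" where
  "rotate_perm b 0 = id"
| "rotate_perm b (Suc m) = Transposition.transpose (b + m) (Suc (b + m)) \<circ> rotate_perm b m"

lemma rotate_perm_apply:
  "rotate_perm b m l = (if l < b then l else if l = b then b + m else if l \<le> b + m then l - 1 else l)"
  by (induction m) (auto simp: transpose_def)

lemma rotate_perm_permutes: "b + m < N \<Longrightarrow> rotate_perm b m permutes {..<N}"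
  by (induction m) (auto intro!: permutes_compose permutes_swap_id simp: permutes_id)

lemma permutation_rotate_perm: "permutation (rotate_perm b m)"
  by (induction m)
    (simp_all only: rotate_perm.simps permutation_id permutation_compose permutation_swap_id)

lemma sign_rotate_perm: "sign (rotate_perm b m) = (-1) ^ m"
proof (induction m)
  case (Suc m)
  show ?case
    unfolding rotate_perm.simps sign_compose[OF permutation_swap_id permutation_rotate_perm]
    by (simp add: sign_swap_id Suc.IH)
qed (simp add: sign_id)

lemma permute_list_rotate_perm:
  assumes "i < length xs"
  shows "permute_list (rotate_perm 0 i) xs = xs ! i # remove_nth i xs"
proof (rule nth_equalityI)
  fix l assume "l < length (permute_list (rotate_perm 0 i) xs)"
  with assms show "permute_list (rotate_perm 0 i) xs ! l = (xs ! i # remove_nth i xs) ! l"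
    by (cases l) (auto simp: permute_list_nth rotate_perm_permutes rotate_perm_apply nth_remove_nth)
qed (use assms in simp)

definition rotate_pair_perm :: "nat \<Rightarrow> nat \<Rightarrow> nat \<Rightarrow> nat" where
  "rotate_pair_perm j k = rotate_perm 0 j \<circ> rotate_perm 1 (k - 1)"

lemma rotate_pair_perm_apply:
  "j < k \<Longrightarrow> rotate_pair_perm j k l =
     (if l = 0 then j else if l = 1 then k else if l < j + 2 then l - 2 else if l \<le> k then l - 1 else l)"
  by (auto simp: rotate_pair_perm_def rotate_perm_apply)

lemma rotate_pair_perm_permutes: "j < k \<Longrightarrow> k < N \<Longrightarrow> rotate_pair_perm j k permutes {..<N}"
  unfolding rotate_pair_perm_def by (intro permutes_compose rotate_perm_permutes) auto

lemma sign_rotate_pair_perm: "sign (rotate_pair_perm j k) = (-1) ^ j * (-1) ^ (k - 1)"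
  by (simp add: rotate_pair_perm_def sign_compose permutation_rotate_perm sign_rotate_perm)

lemma permute_list_rotate_pair_perm:
  assumes "j < k" "k < length xs"
  shows "permute_list (rotate_pair_perm j k) xs = xs ! j # xs ! k # remove_nth j (remove_nth k xs)"
proof (rule nth_equalityI)
  fix l assume "l < length (permute_list (rotate_pair_perm j k) xs)"
  with assms show "permute_list (rotate_pair_perm j k) xs ! l =
      (xs ! j # xs ! k # remove_nth j (remove_nth k xs)) ! l"
    by (cases l; cases "l - 1")
      (auto simp: permute_list_nth rotate_pair_perm_permutes rotate_pair_perm_apply nth_remove_nth)
qed (use assms in simp)

lemma permutes_eq_if_strict_mono_on_tail:
  fixes \<sigma> \<tau> :: "nat \<Rightarrow> nat"
  assumes perm: "\<sigma> permutes {..<N}" "\<tau> permutes {..<N}"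
    and head: "\<And>l. l < p \<Longrightarrow> \<sigma> l = \<tau> l"
    and mono: "strict_mono_on {p..<N} \<sigma>" "strict_mono_on {p..<N} \<tau>"
  shows "\<sigma> = \<tau>"
proof -
  have le: "\<sigma> l \<le> \<tau> l"
    if perm: "\<sigma> permutes {..<N}" "\<tau> permutes {..<N}" and mono: "strict_mono_on {p..<N} \<sigma>"
      and below: "\<And>l'. l' < l \<Longrightarrow> \<sigma> l' = \<tau> l'" and l: "p \<le> l" "l < N"
    for \<sigma> \<tau> :: "nat \<Rightarrow> nat" and l
  proof (rule ccontr)
    assume less: "\<not> \<sigma> l \<le> \<tau> l"
    have "\<tau> l < N" using permutes_in_image[OF perm(2)] l by simp
    then obtain l' where l': "l' < N" "\<sigma> l' = \<tau> l"
      using permutes_surj[OF perm(1)] permutes_not_in[OF perm(1)] by (metis lessThan_iff surjD)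
    consider "l' < l" | "l' = l" | "l < l'" by linarith
    then show False
    proof cases
      case 1
      then have "\<tau> l' = \<tau> l" using below l' by simp
      then show False using 1 permutes_inj[OF perm(2)] by (auto dest: injD)
    next
      case 3
      then have "\<sigma> l < \<sigma> l'" using l l' by (intro strict_mono_onD[OF mono]) auto
      then show False using less l' by simp
    qed (use less l' in simp)
  qed
  have "\<sigma> l = \<tau> l" for l
  proof (induction l rule: less_induct)
    case (less l)
    consider "l < p" | "p \<le> l" "l < N" | "N \<le> l" by linarith
    then show ?case
    proof cases
      case 2
      then show ?thesis
        using le[OF perm(1,2) mono(1) less.IH] le[OF perm(2,1) mono(2)] less.IH
        by (metis order_antisym)
    qed (use head permutes_not_in[OF perm(1)] permutes_not_in[OF perm(2)] in auto)
  qed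
  then show ?thesis by blast
qed

lemma unshuffles_1_eq: "unshuffles 1 n = (\<lambda>i. rotate_perm 0 i) ` {..<Suc n}"
proof
  show "(\<lambda>i. rotate_perm 0 i) ` {..<Suc n} \<subseteq> unshuffles 1 n"
    by (auto simp: unshuffles_def rotate_perm_permutes rotate_perm_apply)
next
  show "unshuffles 1 n \<subseteq> (\<lambda>i. rotate_perm 0 i) ` {..<Suc n}"
  proof
    fix \<sigma> assume \<sigma>: "\<sigma> \<in> unshuffles 1 n"
    then have perm: "\<sigma> permutes {..<Suc n}" by (simp add: unshuffles_def)
    have i: "\<sigma> 0 < Suc n" using permutes_in_image[OF perm] by simp
    have "\<sigma> = rotate_perm 0 (\<sigma> 0)"
      by (rule permutes_eq_if_strict_mono_on_tail[OF perm rotate_perm_permutes, where p = 1])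
        (use \<sigma> i in \<open>auto simp: unshuffles_def rotate_perm_apply strict_mono_on_def\<close>)
    with i show "\<sigma> \<in> (\<lambda>i. rotate_perm 0 i) ` {..<Suc n}" by blast
  qed
qed

lemma unshuffles_2_eq:
  assumes "0 < n"
  shows "unshuffles 2 (n - 1) = (\<lambda>(k, j). rotate_pair_perm j k) ` (SIGMA k:{..<Suc n}. {..<k})"
proof
  show "(\<lambda>(k, j). rotate_pair_perm j k) ` (SIGMA k:{..<Suc n}. {..<k}) \<subseteq> unshuffles 2 (n - 1)"
    using assms by (auto simp: unshuffles_def rotate_pair_perm_apply rotate_pair_perm_permutes)
next
  show "unshuffles 2 (n - 1) \<subseteq> (\<lambda>(k, j). rotate_pair_perm j k) ` (SIGMA k:{..<Suc n}. {..<k})"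
  proof
    fix \<sigma> assume \<sigma>: "\<sigma> \<in> unshuffles 2 (n - 1)"
    then have perm: "\<sigma> permutes {..<Suc n}" using assms by (simp add: unshuffles_def)
    have jk: "\<sigma> 0 < \<sigma> 1" using \<sigma> by (simp add: unshuffles_def)
    have k: "\<sigma> 1 < Suc n" using permutes_in_image[OF perm] assms by simp
    have "\<sigma> = rotate_pair_perm (\<sigma> 0) (\<sigma> 1)"
      by (rule permutes_eq_if_strict_mono_on_tail[OF perm rotate_pair_perm_permutes[OF jk k], of 2])
        (use \<sigma> assms jk in \<open>auto simp: unshuffles_def rotate_pair_perm_apply less_2_cases_iff
          strict_mono_on_def\<close>)
    with jk k show "\<sigma> \<in> (\<lambda>(k, j). rotate_pair_perm j k) ` (SIGMA k:{..<Suc n}. {..<k})" by force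
  qed
qed

lemma skew_transpose_if_skew_adjacent:
  fixes g :: "'a list \<Rightarrow> 'b::ab_group_add"
  assumes adjacent: "\<And>xs u v ys. length xs + length ys + 2 = N \<Longrightarrow>
      g (xs @ v # u # ys) = - g (xs @ u # v # ys)"
    and "a < b" "b < N" "length zs = N"
  shows "g (permute_list (Transposition.transpose a b) zs) = - g zs"
  using assms(2-4)
proof (induction b arbitrary: zs)
  case (Suc b)
  have swap_Suc: "g (permute_list (Transposition.transpose i (Suc i)) ys) = - g ys"
    if "Suc i < N" "length ys = N" for i ys
  proof -
    let ?xs = "take i ys" and ?u = "ys ! i" and ?v = "ys ! Suc i" and ?ys = "drop (Suc (Suc i)) ys"
    have ys: "ys = ?xs @ ?u # ?v # ?ys"
      using that by (simp add: Cons_nth_drop_Suc)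
    have "permute_list (Transposition.transpose i (Suc i)) ys = ?xs @ ?v # ?u # ?ys"
      by (subst ys, rule permute_list_transpose_Suc) (use that in simp)
    moreover have "g (?xs @ ?v # ?u # ?ys) = - g ys"
      by (subst (2) ys, rule adjacent) (use that in simp)
    ultimately show ?thesis by simp
  qed
  show ?case
  proof (cases "a = b")
    case False
    then have "a < b" using Suc by simp
    let ?t = "Transposition.transpose a b"
    have perms: "?t permutes {..<length zs}" "Transposition.transpose b (Suc b) permutes {..<length zs}"
      using Suc \<open>a < b\<close> by (auto intro: permutes_swap_id)
    have "Transposition.transpose a (Suc b) = ?t \<circ> Transposition.transpose b (Suc b) \<circ> ?t"
      using \<open>a < b\<close> by (simp add: transpose_comp_triple)
    then have "permute_list (Transposition.transpose a (Suc b)) zs =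
        permute_list ?t (permute_list (Transposition.transpose b (Suc b)) (permute_list ?t zs))"
      by (simp only: permute_list_compose perms)
    then show ?thesis
      using Suc.IH[OF \<open>a < b\<close>] swap_Suc[of b "permute_list ?t zs"] Suc.prems by simp
  qed (use Suc swap_Suc in simp)
qed simp

context vector_space
begin

lemma skew_if_skew_adjacent:
  fixes g :: "'c list \<Rightarrow> 'b"
  assumes adjacent: "\<And>xs u v ys. length xs + length ys + 2 = N \<Longrightarrow>
      g (xs @ v # u # ys) = - g (xs @ u # v # ys)"
    and \<sigma>: "\<sigma> permutes {..<N}" and "length zs = N"
  shows "g (permute_list \<sigma> zs) = scale (of_int (sign \<sigma>)) (g zs)"
  using \<sigma> finite_lessThan \<open>length zs = N\<close>
proof (induction arbitrary: zs rule: permutes_induct)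
  case id
  then show ?case by (simp add: sign_id)
next
  case (swap a b p)
  let ?t = "Transposition.transpose a b"
  have "g (permute_list (?t \<circ> p) zs) = g (permute_list p (permute_list ?t zs))"
    using swap by (simp add: permute_list_compose)
  also have "\<dots> = scale (of_int (sign p)) (g (permute_list ?t zs))"
    using swap by simp
  also have "g (permute_list ?t zs) = - g zs"
    using swap skew_transpose_if_skew_adjacent[where g = g and N = N, OF adjacent, of a b zs]
      skew_transpose_if_skew_adjacent[where g = g and N = N, OF adjacent, of b a zs]
    by (cases "a < b") (auto simp: transpose_commute)
  also have "sign p = - sign (?t \<circ> p)"
  proof -
    have "permutation p" using swap(4) by (auto simp: permutation_permutes)
    then show ?thesis using swap(3) by (simp add: sign_compose permutation_swap_id sign_swap_id)
  qed
  finally show ?case by (simp only: of_int_minus scale_minus_left scale_minus_right minus_minus)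
qed

lemma multilin_if_skew_and_linear_first:
  fixes g :: "'c::ab_group_add list \<Rightarrow> 'b" and s :: "'a \<Rightarrow> 'c \<Rightarrow> 'c"
  assumes skew: "\<And>\<sigma> zs. \<sigma> permutes {..<N} \<Longrightarrow> length zs = N \<Longrightarrow>
      g (permute_list \<sigma> zs) = scale (of_int (sign \<sigma>)) (g zs)"
    and first: "\<And>ys. length ys + 1 = N \<Longrightarrow> Vector_Spaces.linear s scale (\<lambda>v. g (v # ys))"
  shows "multilin s scale N g"
  unfolding multilin_def
proof (intro allI impI)
  fix xs ys :: "'c list" assume len: "length xs + length ys + 1 = N"
  let ?\<rho> = "rotate_perm 0 (length xs)" and ?e = "of_int (sign (rotate_perm 0 (length xs)))"
  have "g (v # xs @ ys) = scale ?e (g (xs @ v # ys))" for v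
    using skew[of ?\<rho> "xs @ v # ys"] rotate_perm_permutes[of 0 "length xs" N] len
    by (simp add: permute_list_rotate_perm remove_nth_append)
  moreover have "?e * ?e = 1"
    by (simp only: of_int_mult[symmetric] sign_idempotent of_int_1)
  ultimately have "g (xs @ v # ys) = scale ?e (g (v # xs @ ys))" for v
    by (metis scale_scale scale_one)
  moreover have "Vector_Spaces.linear s scale (\<lambda>v. scale ?e (g (v # xs @ ys)))"
  proof -
    have lin: "Vector_Spaces.linear s scale (\<lambda>v. g (v # xs @ ys))"
      using first[of "xs @ ys"] len by simp
    then interpret vector_space_pair s scale
      by (simp add: vector_space_pair_def Vector_Spaces.linear_iff)
    show ?thesis using lin by (rule linear_compose_scale_right)
  qed
  ultimately show "Vector_Spaces.linear s scale (\<lambda>v. g (xs @ v # ys))" by simp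
qed

end

definition tensor_apply :: "('c \<Rightarrow> 'l) list \<Rightarrow> 'c list \<Rightarrow> 'l list" where
  "tensor_apply gs ts = map (\<lambda>i. (gs ! i) (ts ! i)) [0..<length gs]"

lemma induced_eq_tensor_apply:
  "induced \<Delta> \<chi> gs c = (\<Sum>ts\<leftarrow>iter_coprod \<Delta> (length gs - 1) c. \<chi> (tensor_apply gs ts))"
  by (simp add: induced_def tensor_apply_def)

lemma twisted_permute_list:
  assumes "\<sigma> permutes {..<length gs}"
  shows "twisted \<Delta> \<chi> \<sigma> (permute_list \<sigma> gs) c =
    (\<Sum>ts\<leftarrow>iter_coprod \<Delta> (length gs - 1) c. \<chi> (permute_list \<sigma> (tensor_apply gs ts)))"
proof -
  have "map (\<lambda>i. (permute_list \<sigma> gs ! i) (ts ! \<sigma> i)) [0..<length gs] =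
      permute_list \<sigma> (tensor_apply gs ts)" for ts
    unfolding permute_list_def tensor_apply_def using permutes_in_image[OF assms]
    by (intro map_cong) auto
  then show ?thesis by (simp add: twisted_def)
qed

lemma induced_permute_list:
  assumes "\<sigma> permutes {..<length gs}"
  shows "induced \<Delta> \<chi> (permute_list \<sigma> gs) c =
    twisted \<Delta> (\<lambda>ys. \<chi> (permute_list \<sigma> ys)) (inv \<sigma>) gs c"
proof -
  have "tensor_apply (permute_list \<sigma> gs) ts =
      permute_list \<sigma> (map (\<lambda>i. (gs ! i) (ts ! inv \<sigma> i)) [0..<length gs])" for ts
    unfolding permute_list_def tensor_apply_def
    using permutes_in_image[OF assms] permutes_inverses(2)[OF assms] by (intro map_cong) auto
  then show ?thesis by (simp add: twisted_def induced_eq_tensor_apply)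
qed

lemma sum_sum_list_commute:
  "(\<Sum>x\<in>A. \<Sum>t\<leftarrow>ts. g x t) = (\<Sum>t\<leftarrow>ts. \<Sum>x\<in>A. g x t)"
  by (induction ts) (simp_all add: sum.distrib)

lemma (in vector_space) scale_sum_list: "scale a (\<Sum>t\<leftarrow>ts. h t) = (\<Sum>t\<leftarrow>ts. scale a (h t))"
  by (induction ts) (simp_all add: scale_right_distrib)

lemma (in vector_space) induced_permute_list_if_skew:
  assumes skew: "\<And>\<sigma> zs. \<sigma> permutes {..<N} \<Longrightarrow> length zs = N \<Longrightarrow>
      \<chi> (permute_list \<sigma> zs) = scale (of_int (sign \<sigma>)) (\<chi> zs)"
    and \<sigma>: "\<sigma> permutes {..<N}" and len: "length gs = N"
  shows "induced \<Delta> \<chi> (permute_list \<sigma> gs) c =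
    scale (of_int (sign \<sigma>)) (twisted \<Delta> \<chi> (inv \<sigma>) gs c)"
  using \<sigma> len skew[OF \<sigma>]
  by (simp add: induced_permute_list twisted_def scale_sum_list)

locale lie_cochain = L: vector_space sL + B: vector_space sB
  for sL :: "'k::field \<Rightarrow> 'l::ab_group_add \<Rightarrow> 'l" and sB :: "'k \<Rightarrow> 'b::ab_group_add \<Rightarrow> 'b" +
  fixes \<phi> :: "'l \<Rightarrow> 'l \<Rightarrow> 'l" and \<psi> :: "'l \<Rightarrow> 'b \<Rightarrow> 'b"
    and f :: "'l list \<Rightarrow> 'b" and n :: nat
  assumes bilin_bracket: "bilin sL sL sL \<phi>" and bracket_self: "\<And>x. \<phi> x x = 0"
    and bilin_action: "bilin sL sB sB \<psi>" and Alt_f: "Alt sL sB n f"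
begin

sublocale LL: vector_space_pair sL sL ..
sublocale LB: vector_space_pair sL sB ..
sublocale BB: vector_space_pair sB sB ..

lemma linear_bracket_left: "Vector_Spaces.linear sL sL (\<lambda>x. \<phi> x y)"
  and linear_bracket_right: "Vector_Spaces.linear sL sL (\<phi> x)"
  and linear_action_left: "Vector_Spaces.linear sL sB (\<lambda>x. \<psi> x b)"
  and linear_action_right: "Vector_Spaces.linear sB sB (\<psi> x)"
  using bilin_bracket bilin_action by (auto simp: bilin_def)

lemma bracket_antisym: "\<phi> y x = - \<phi> x y"
proof -
  have "0 = \<phi> (x + y) (x + y)" by (simp only: bracket_self)
  also have "\<dots> = \<phi> x x + \<phi> y x + (\<phi> x y + \<phi> y y)"
    by (simp only: LL.linear_add[OF linear_bracket_left] LL.linear_add[OF linear_bracket_right])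
  also have "\<dots> = \<phi> y x + \<phi> x y" by (simp only: bracket_self add_0_left add_0_right)
  finally show ?thesis by (simp add: eq_neg_iff_add_eq_0)
qed

lemma linear_f_slot:
  "length xs + length ys + 1 = n \<Longrightarrow> Vector_Spaces.linear sL sB (\<lambda>v. f (xs @ v # ys))"
  using Alt_f by (simp add: Alt_def multilin_def)

lemma f_swap_adjacent:
  assumes "length xs + length ys + 2 = n"
  shows "f (xs @ v # u # ys) = - f (xs @ u # v # ys)"
proof -
  let ?t = "Transposition.transpose (length xs) (Suc (length xs))"
  have "?t permutes {..<n}" using assms by (intro permutes_swap_id) auto
  then have "f (permute_list ?t (xs @ u # v # ys)) = sB (of_int (sign ?t)) (f (xs @ u # v # ys))"
    using Alt_f assms by (simp add: Alt_def)
  then show ?thesis by (simp add: permute_list_transpose_Suc sign_swap_id B.scale_minus_left)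
qed

definition action_term :: "'l list \<Rightarrow> nat \<Rightarrow> 'b" where
  "action_term zs i = sB ((-1) ^ i) (\<psi> (zs ! i) (f (remove_nth i zs)))"

definition bracket_term :: "'l list \<Rightarrow> nat \<Rightarrow> nat \<Rightarrow> 'b" where
  "bracket_term zs j k =
    sB ((-1) ^ (j + k)) (f (\<phi> (zs ! j) (zs ! k) # remove_nth j (remove_nth k zs)))"

lemma CE_d_eq_terms:
  "CE_d sB \<phi> \<psi> f zs = (\<Sum>i<length zs. action_term zs i) +
     (\<Sum>(k, j)\<in>(SIGMA k:{..<length zs}. {..<k}). bracket_term zs j k)"
proof -
  have "(\<Sum>k<length zs. \<Sum>j<k.
      sB ((-1) ^ (j + k)) (f (\<phi> (zs ! j) (zs ! k) # nths zs (- {j, k})))) =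
      (\<Sum>k<length zs. \<Sum>j<k. bracket_term zs j k)"
    by (intro sum.cong refl) (simp add: bracket_term_def nths_Compl_doubleton)
  also have "\<dots> = (\<Sum>(k, j)\<in>(SIGMA k:{..<length zs}. {..<k}). bracket_term zs j k)"
    by (rule sum.Sigma) auto
  finally show ?thesis
    unfolding CE_d_def action_term_def nths_Compl_singleton by (rule arg_cong)
qed

lemma f_neg_first: "length ys + 1 = n \<Longrightarrow> f (- x # ys) = - f (x # ys)"
  using LB.linear_neg[OF linear_f_slot[of "[]" ys]] by simp

lemma action_term_swap_adjacent:
  assumes len: "length xs + length ys + 2 = Suc n" and l: "l < Suc n"
  shows "action_term (xs @ v # u # ys) l =
    - action_term (xs @ u # v # ys) (Transposition.transpose (length xs) (Suc (length xs)) l)"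
proof -
  note simps = action_term_def remove_nth_append nth_append BB.linear_neg[OF linear_action_right]
    B.scale_minus_left B.scale_minus_right
  consider "l < length xs" | "l = length xs" | "l = Suc (length xs)"
    | r where "l = Suc (Suc (length xs + r))"
    by (rule nat_less_eq_Suc_cases)
  then show ?thesis
  proof cases
    case 1
    have "f (remove_nth l xs @ v # u # ys) = - f (remove_nth l xs @ u # v # ys)"
      by (rule f_swap_adjacent) (use 1 len in simp)
    then show ?thesis using 1 by (simp add: simps)
  next
    case 4
    have "f (xs @ v # u # remove_nth r ys) = - f (xs @ u # v # remove_nth r ys)"
      by (rule f_swap_adjacent) (use 4 len l in simp)
    then show ?thesis using 4 by (simp add: simps)
  qed (simp_all add: simps)
qed

lemma bracket_term_swap_adjacent:
  assumes len: "length xs + length ys + 2 = Suc n" and jk: "j < k" "k < Suc n"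
  defines "s \<equiv> Transposition.transpose (length xs) (Suc (length xs))"
  shows "bracket_term (xs @ v # u # ys) j k =
    - (if j = length xs \<and> k = Suc (length xs) then bracket_term (xs @ u # v # ys) j k
       else bracket_term (xs @ u # v # ys) (s j) (s k))"
proof -
  let ?i = "length xs"
  note simps = bracket_term_def s_def remove_nth_append nth_append B.scale_minus_left B.scale_minus_right
  consider "k < ?i" | "k = ?i" | "k = Suc ?i" | rk where "k = Suc (Suc (?i + rk))"
    by (rule nat_less_eq_Suc_cases)
  then show ?thesis
  proof cases
    case 1
    have "f ((\<phi> (xs ! j) (xs ! k) # remove_nth j (remove_nth k xs)) @ v # u # ys) =
        - f ((\<phi> (xs ! j) (xs ! k) # remove_nth j (remove_nth k xs)) @ u # v # ys)"
      by (rule f_swap_adjacent) (use 1 jk len in simp)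
    moreover have "j < length xs - 1" using 1 jk by simp
    ultimately show ?thesis using 1 jk by (simp add: simps)
  next
    case 3
    show ?thesis
    proof (cases "j = ?i")
      case True
      have "f (\<phi> v u # xs @ ys) = - f (\<phi> u v # xs @ ys)"
        using f_neg_first[of "xs @ ys" "\<phi> u v"] len by (simp add: bracket_antisym[of v u])
      then show ?thesis using 3 True by (simp add: simps)
    next
      case False
      then show ?thesis using 3 jk by (simp add: simps)
    qed
  next
    case 4
    have rk: "rk < length ys" using 4 jk len by simp
    consider "j < ?i" | "j = ?i" | "j = Suc ?i" | rj where "j = Suc (Suc (?i + rj))"
      by (rule nat_less_eq_Suc_cases)
    then show ?thesis
    proof cases
      case 1
      have "f ((\<phi> (xs ! j) (ys ! rk) # remove_nth j xs) @ v # u # remove_nth rk ys) =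
          - f ((\<phi> (xs ! j) (ys ! rk) # remove_nth j xs) @ u # v # remove_nth rk ys)"
        by (rule f_swap_adjacent) (use 1 rk len in simp)
      then show ?thesis using 1 4 by (simp add: simps)
    next
      case 5: 4
      have rj: "rj < rk" using 4 5 jk by simp
      have "f ((\<phi> (ys ! rj) (ys ! rk) # xs) @ v # u # remove_nth rj (remove_nth rk ys)) =
          - f ((\<phi> (ys ! rj) (ys ! rk) # xs) @ u # v # remove_nth rj (remove_nth rk ys))"
        by (rule f_swap_adjacent) (use rj rk len in simp)
      then show ?thesis using 4 5 rj rk by (simp add: simps)
    qed (use 4 in \<open>simp_all add: simps\<close>)
  qed (use jk in \<open>simp_all add: simps\<close>)
qed

lemma CE_d_swap_adjacent:
  assumes len: "length xs + length ys + 2 = Suc n"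
  shows "CE_d sB \<phi> \<psi> f (xs @ v # u # ys) = - CE_d sB \<phi> \<psi> f (xs @ u # v # ys)"
proof -
  let ?i = "length xs" and ?ws = "xs @ v # u # ys" and ?zs = "xs @ u # v # ys"
  define s where "s = Transposition.transpose ?i (Suc ?i)"
  define P where "P = (SIGMA k:{..<Suc n}. {..<k})"
  have lengths: "length ?ws = Suc n" "length ?zs = Suc n" using len by simp_all
  have "s permutes {..<Suc n}" unfolding s_def using len by (intro permutes_swap_id) auto
  then have "(\<Sum>l<Suc n. action_term ?zs (s l)) = (\<Sum>l<Suc n. action_term ?zs l)"
    using sum.permute[of s "{..<Suc n}" "action_term ?zs"] by simp
  then have action: "(\<Sum>l<Suc n. action_term ?ws l) = - (\<Sum>l<Suc n. action_term ?zs l)"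
    using action_term_swap_adjacent[OF len] by (simp add: sum_negf s_def)
  text \<open>\<open>\<tau>\<close> relabels pairs of slots by \<open>s\<close>, except the pair of the two swapped
    slots, which is fixed: there the sign comes from the antisymmetry of the bracket.\<close>
  define \<tau> where "\<tau> = (\<lambda>(k, j). if k = Suc ?i \<and> j = ?i then (k, j) else (s k, s j))"
  have s_apply: "s x = (if x = ?i then Suc ?i else if x = Suc ?i then ?i else x)" for x
    unfolding s_def by (simp add: transpose_def)
  have "Suc ?i < Suc n" using len by simp
  then have \<tau>: "\<tau> (\<tau> p) = p" "\<tau> p \<in> P" if "p \<in> P" for p
    using that unfolding \<tau>_def P_def by (auto simp: s_apply split: if_splits)
  have bracket: "(\<Sum>(k, j)\<in>P. bracket_term ?ws j k) = - (\<Sum>(k, j)\<in>P. bracket_term ?zs j k)"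
  proof -
    have "(\<Sum>(k, j)\<in>P. bracket_term ?ws j k) =
        (\<Sum>p\<in>P. - (case p of (k, j) \<Rightarrow> bracket_term ?zs j k))"
    proof (rule sum.reindex_bij_witness[where i = \<tau> and j = \<tau>])
      fix p assume "p \<in> P"
      then obtain k j where "p = (k, j)" "j < k" "k < Suc n" unfolding P_def by auto
      then show "- (case \<tau> p of (k, j) \<Rightarrow> bracket_term ?zs j k) =
          (case p of (k, j) \<Rightarrow> bracket_term ?ws j k)"
        using bracket_term_swap_adjacent[OF len, of j k v u] unfolding \<tau>_def s_def by auto
    qed (use \<tau> in auto)
    then show ?thesis by (simp add: sum_negf)
  qed
  show ?thesis
    unfolding CE_d_eq_terms lengths P_def[symmetric] action bracket by simp
qed

lemma CE_d_skew:
  "\<sigma> permutes {..<Suc n} \<Longrightarrow> length zs = Suc n \<Longrightarrow>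
    CE_d sB \<phi> \<psi> f (permute_list \<sigma> zs) = sB (of_int (sign \<sigma>)) (CE_d sB \<phi> \<psi> f zs)"
  by (rule B.skew_if_skew_adjacent[where g = "CE_d sB \<phi> \<psi> f", OF CE_d_swap_adjacent])

lemma linear_action_term_first:
  assumes "length ys = n" "i < Suc n"
  shows "Vector_Spaces.linear sL sB (\<lambda>v. action_term (v # ys) i)"
proof (cases i)
  case 0
  then show ?thesis
    by (simp add: action_term_def LB.linear_compose_scale_right linear_action_left)
next
  case (Suc i')
  have "Vector_Spaces.linear sL sB (\<lambda>v. f (v # remove_nth i' ys))"
    using linear_f_slot[of "[]" "remove_nth i' ys"] assms Suc by simp
  then show ?thesis
    using Suc by (simp add: action_term_def LB.linear_compose_scale_right LB.linear_compose_neg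
        Vector_Spaces.linear_compose[OF _ linear_action_right, unfolded o_def])
qed

lemma linear_bracket_term_first:
  assumes "length ys = n" "j < k" "k < Suc n"
  shows "Vector_Spaces.linear sL sB (\<lambda>v. bracket_term (v # ys) j k)"
proof -
  obtain k' where k: "k = Suc k'" using assms by (cases k) auto
  show ?thesis
  proof (cases j)
    case 0
    have "Vector_Spaces.linear sL sB (\<lambda>v. f (v # remove_nth k' ys))"
      using linear_f_slot[of "[]" "remove_nth k' ys"] assms k by simp
    then have "Vector_Spaces.linear sL sB (\<lambda>v. f (\<phi> v (ys ! k') # remove_nth k' ys))"
      using Vector_Spaces.linear_compose[OF linear_bracket_left] by (simp add: o_def)
    then show ?thesis
      using 0 k by (simp add: bracket_term_def LB.linear_compose_scale_right LB.linear_compose_neg)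
  next
    case (Suc j')
    have "Vector_Spaces.linear sL sB
        (\<lambda>v. f ([\<phi> (ys ! j') (ys ! k')] @ v # remove_nth j' (remove_nth k' ys)))"
      by (rule linear_f_slot) (use assms k Suc in simp)
    then show ?thesis
      using Suc k by (simp add: bracket_term_def LB.linear_compose_scale_right LB.linear_compose_neg)
  qed
qed

lemma Alt_CE_d: "Alt sL sB (Suc n) (CE_d sB \<phi> \<psi> f)"
proof -
  have "Vector_Spaces.linear sL sB (\<lambda>v. CE_d sB \<phi> \<psi> f (v # ys))"
    if "length ys + 1 = Suc n" for ys
    unfolding CE_d_eq_terms using that
    by (auto intro!: LB.linear_compose_add LB.linear_compose_sum linear_action_term_first
        linear_bracket_term_first)
  then have "multilin sL sB (Suc n) (CE_d sB \<phi> \<psi> f)"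
    by (intro B.multilin_if_skew_and_linear_first CE_d_skew)
  then show ?thesis by (simp add: Alt_def CE_d_skew)
qed

lemma sum_unshuffles_1_eq_action_terms:
  assumes len: "length gs = Suc n"
  shows "(\<Sum>\<sigma>\<in>unshuffles 1 n. sB (of_int (sign \<sigma>))
      (twisted \<Delta> (\<lambda>ys. \<psi> (hd ys) (f (tl ys))) \<sigma> (permute_list \<sigma> gs) c)) =
    (\<Sum>ts\<leftarrow>iter_coprod \<Delta> n c. \<Sum>i<Suc n. action_term (tensor_apply gs ts) i)"
proof -
  have inj: "inj_on (\<lambda>i. rotate_perm 0 i) {..<Suc n}"
    by (rule inj_onI) (drule fun_cong[of _ _ 0], simp add: rotate_perm_apply)
  have "sB (of_int (sign (rotate_perm 0 i))) (twisted \<Delta> (\<lambda>ys. \<psi> (hd ys) (f (tl ys)))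
      (rotate_perm 0 i) (permute_list (rotate_perm 0 i) gs) c) =
    (\<Sum>ts\<leftarrow>iter_coprod \<Delta> n c. action_term (tensor_apply gs ts) i)"
    if "i < Suc n" for i
  proof -
    have "rotate_perm 0 i permutes {..<length gs}" using that len by (simp add: rotate_perm_permutes)
    from twisted_permute_list[OF this, where \<chi> = "\<lambda>ys. \<psi> (hd ys) (f (tl ys))"] show ?thesis
      using that len by (simp add: tensor_apply_def permute_list_rotate_perm sign_rotate_perm
          B.scale_sum_list action_term_def)
  qed
  then show ?thesis
    unfolding unshuffles_1_eq sum.reindex[OF inj] by (simp add: sum_sum_list_commute)
qed

lemma sum_unshuffles_2_eq_bracket_terms:
  assumes len: "length gs = Suc n" and "0 < n"
  shows "(\<Sum>\<sigma>\<in>unshuffles 2 (n - 1). sB (of_int (sign \<sigma>))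
      (twisted \<Delta> (\<lambda>ys. f (\<phi> (ys ! 0) (ys ! 1) # drop 2 ys)) \<sigma> (permute_list \<sigma> gs) c)) =
    - (\<Sum>ts\<leftarrow>iter_coprod \<Delta> n c. \<Sum>(k, j)\<in>(SIGMA k:{..<Suc n}. {..<k}).
        bracket_term (tensor_apply gs ts) j k)"
proof -
  define P where "P = (SIGMA k:{..<Suc n}. {..<k})"
  let ?\<chi> = "\<lambda>ys. f (\<phi> (ys ! 0) (ys ! 1) # drop 2 ys)"
  have inj: "inj_on (\<lambda>(k, j). rotate_pair_perm j k) P"
    by (rule inj_onI) (frule fun_cong[of _ _ 0], drule fun_cong[of _ _ 1],
        auto simp: P_def rotate_pair_perm_apply)
  have "sB (of_int (sign (rotate_pair_perm j k)))
      (twisted \<Delta> ?\<chi> (rotate_pair_perm j k) (permute_list (rotate_pair_perm j k) gs) c) =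
    - (\<Sum>ts\<leftarrow>iter_coprod \<Delta> n c. bracket_term (tensor_apply gs ts) j k)"
    if "j < k" "k < Suc n" for j k
  proof -
    have "sB (of_int (sign (rotate_pair_perm j k))) x = - sB ((-1) ^ (j + k)) x" for x
      using that by (cases k) (simp_all add: sign_rotate_pair_perm power_add B.scale_minus_left)
    moreover have "rotate_pair_perm j k permutes {..<length gs}"
      using that len by (simp add: rotate_pair_perm_permutes)
    ultimately show ?thesis
      using twisted_permute_list[OF \<open>rotate_pair_perm j k permutes _\<close>, where \<chi> = ?\<chi>] that len
      by (simp add: tensor_apply_def permute_list_rotate_pair_perm B.scale_sum_list bracket_term_def
          uminus_sum_list_map comp_def)
  qed
  then have "(\<Sum>(k, j)\<in>P. sB (of_int (sign (rotate_pair_perm j k)))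
      (twisted \<Delta> ?\<chi> (rotate_pair_perm j k) (permute_list (rotate_pair_perm j k) gs) c)) =
    (\<Sum>(k, j)\<in>P. - (\<Sum>ts\<leftarrow>iter_coprod \<Delta> n c. bracket_term (tensor_apply gs ts) j k))"
    by (intro sum.cong) (auto simp: P_def)
  then show ?thesis
    unfolding unshuffles_2_eq[OF \<open>0 < n\<close>] P_def[symmetric] sum.reindex[OF inj]
    by (simp add: sum_negf sum_sum_list_commute case_prod_unfold comp_def)
qed

lemma delta_F_eq_induced:
  assumes len: "length gs = Suc n"
  shows "delta_F sB \<Delta> \<phi> \<psi> n f gs c = induced \<Delta> (CE_d sB \<phi> \<psi> f) gs c"
proof -
  have "length (tensor_apply gs ts) = Suc n" for ts by (simp add: tensor_apply_def len)
  moreover have "(SIGMA k:{..<Suc n}. {..<k}) = {}" if "n = 0" using that by auto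
  ultimately show ?thesis
    using sum_unshuffles_1_eq_action_terms[OF len] sum_unshuffles_2_eq_bracket_terms[OF len]
    by (simp add: delta_F_def induced_eq_tensor_apply len CE_d_eq_terms sum_list_addf)
qed

lemma delta_F_permute_list:
  assumes "length gs = Suc n" and "\<sigma> permutes {..<Suc n}"
  shows "delta_F sB \<Delta> \<phi> \<psi> n f (permute_list \<sigma> gs) c =
    sB (of_int (sign \<sigma>)) (twisted \<Delta> (CE_d sB \<phi> \<psi> f) (inv \<sigma>) gs c)"
  using assms by (simp add: delta_F_eq_induced B.induced_permute_list_if_skew[OF CE_d_skew])

end

theorem proposition6:
  fixes sC :: "'k::field \<Rightarrow> 'c::ab_group_add \<Rightarrow> 'c"
    and sL :: "'k \<Rightarrow> 'l::ab_group_add \<Rightarrow> 'l"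
    and sB :: "'k \<Rightarrow> 'b::ab_group_add \<Rightarrow> 'b"
    and \<Delta> :: "'c \<Rightarrow> ('c \<times> 'c) list"
    and \<phi> :: "'l \<Rightarrow> 'l \<Rightarrow> 'l"
    and \<psi> :: "'l \<Rightarrow> 'b \<Rightarrow> 'b"
    and f :: "'l list \<Rightarrow> 'b"
    and n :: nat
  assumes "coassoc_coalgebra sC \<Delta>"
    and "lie_algebra sL \<phi>"
    and "lie_module sL sB \<phi> \<psi>"
    and "Alt sL sB n f"
  shows "Alt sL sB (Suc n) (CE_d sB \<phi> \<psi> f)
    \<and> (\<forall>gs. length gs = Suc n \<longrightarrow> (\<forall>g\<in>set gs. Vector_Spaces.linear sC sL g) \<longrightarrow>
          (\<forall>c. delta_F sB \<Delta> \<phi> \<psi> n f gs c = induced \<Delta> (CE_d sB \<phi> \<psi> f) gs c))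
    \<and> TD_skew sC sL sB \<Delta> (Suc n) (CE_d sB \<phi> \<psi> f) (delta_F sB \<Delta> \<phi> \<psi> n f)"
proof -
  have "lie_cochain sL sB \<phi> \<psi> f n"
    using assms(2-4)
    by (auto simp: lie_cochain_def lie_cochain_axioms_def lie_algebra_def lie_module_def)
  then interpret lie_cochain sL sB \<phi> \<psi> f n .
  show ?thesis
    using Alt_CE_d delta_F_eq_induced delta_F_permute_list
    by (auto simp: TD_skew_def Alt_def)
qed

end
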